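(* Let $p\geq 1$, let $X$ be a random vector in $\mathbb{R}^d$ with $\mathbb{E}|X|^p<\infty$, and let $X'$ be an independent copy of $X$. If $X-X'$ satisfies $\mathrm{SMP}_p(\kappa)$ for some $\kappa>0$, then $X$ satisfies $\mathrm{SMP}_p(\min\{1/2,\kappa/4\})$.
   Context: For a real random variable $Y$ and $p>0$, $\|Y\|_p:=(\mathbb{E}|Y|^p)^{1/p}$; $\langle\cdot,\cdot\rangle$ is the standard inner product on $\mathbb{R}^d$ and $|\cdot|$ the Euclidean norm. A random vector $X$ in $\mathbb{R}^d$ satisfies the $L_p$-Sudakov minoration principle with constant $\kappa>0$, written $\mathrm{SMP}_p(\kappa)$, if for every $A>0$ and every set $T\subset\mathbb{R}^d$ with $|T|\geq e^p$ (cardinality) such that $\|\langle t-s,X\rangle\|_p\geq A$ for all distinct $s,t\in T$, one has $\mathbb{E}\sup_{t,s\in T}\langle t-s,X\rangle\geq \kappa A$. $X$ satisfies $\mathrm{SMP}(\kappa)$ if it satisfies $\mathrm{SMP}_p(\kappa)$ for every $p\geq 1$. *)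

theory Defs
  imports "HOL-Probability.Probability"
begin

definition Lp_norm :: "'a measure \<Rightarrow> ('a \<Rightarrow> real) \<Rightarrow> real \<Rightarrow> real" where
  "Lp_norm M Y p = (\<integral>\<omega>. \<bar>Y \<omega>\<bar> powr p \<partial>M) powr (1 / p)"

text \<open>The expectation of the (nonnegative, since t = s is allowed) supremum is taken as a
  nonnegative integral, so that it makes sense for arbitrary (also infinite) sets T.\<close>
definition SMP_p :: "'a measure \<Rightarrow> ('a \<Rightarrow> 'd::euclidean_space) \<Rightarrow> real \<Rightarrow> real \<Rightarrow> bool" where
  "SMP_p M X p \<kappa> \<longleftrightarrow>
     (\<forall>A>0. \<forall>T :: 'd set.
        (infinite T \<or> exp p \<le> real (card T)) \<longrightarrow>
        (\<forall>s\<in>T. \<forall>t\<in>T. s \<noteq> t \<longrightarrow> Lp_norm M (\<lambda>\<omega>. (t - s) \<bullet> X \<omega>) p \<ge> A) \<longrightarrow>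
        (\<integral>\<^sup>+ \<omega>. (\<Squnion>t\<in>T. \<Squnion>s\<in>T. ennreal ((t - s) \<bullet> X \<omega>)) \<partial>M) \<ge> ennreal (\<kappa> * A))"

end

(*
  Let m = E X. If some pair s, t in T has (t - s) . m >= A/2, then already
  E sup (t - s) . X >= E (t - s) . X >= A/2. Otherwise |(t - s) . m| <= A/2 for all pairs, and
  Jensen's inequality for the independent copy gives E|u . (X - m)|^p <= E|u . (X - X')|^p;
  combined with |a + b|^p <= 2^(p-1) (|a|^p + |b|^p) this shows that T is A/2-separated for X - X'.
  SMP_p for X - X' then yields kappa A/2 <= E sup (t - s) . (X - X') <= 2 E sup (t - s) . X,
  the last step because X and X' have the same law.
*)

theory Submission
  imports Defs
begin

lemma powr_convex_nonneg:
  assumes "p \<ge> 1"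
  shows "convex_on {0..} (\<lambda>x::real. x powr p)"
proof (rule convex_on_linorderI)
  fix t x y :: real
  assume t: "0 < t" "t < 1" and xy: "x \<in> {0..}" "y \<in> {0..}" "x < y"
  show "((1 - t) *\<^sub>R x + t *\<^sub>R y) powr p \<le> (1 - t) * x powr p + t * y powr p"
  proof (cases "x = 0")
    case True
    have "t powr p \<le> t"
      using t assms powr_le_one_le[of t p] by simp
    then have "t powr p * y powr p \<le> t * y powr p"
      by (intro mult_right_mono) auto
    then show ?thesis
      using True t xy by (simp add: powr_mult)
  next
    case False
    then show ?thesis
      using convex_onD[OF powr_convex[OF assms], of t x y] t xy by simp
  qed
qed simp

lemma convex_on_abs_powr:
  assumes "p \<ge> 1"
  shows "convex_on UNIV (\<lambda>x::real. \<bar>x\<bar> powr p)"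
proof (rule convex_onI)
  fix t x y :: real
  assume t: "0 < t" "t < 1"
  have "\<bar>(1 - t) *\<^sub>R x + t *\<^sub>R y\<bar> powr p \<le> ((1 - t) * \<bar>x\<bar> + t * \<bar>y\<bar>) powr p"
    using t assms by (intro powr_mono2) (auto intro: abs_triangle_ineq[THEN order_trans] simp: abs_mult)
  also have "\<dots> \<le> (1 - t) * \<bar>x\<bar> powr p + t * \<bar>y\<bar> powr p"
    using convex_onD[OF powr_convex_nonneg[OF assms], of t "\<bar>x\<bar>" "\<bar>y\<bar>"] t by simp
  finally show "\<bar>(1 - t) *\<^sub>R x + t *\<^sub>R y\<bar> powr p \<le> (1 - t) * \<bar>x\<bar> powr p + t * \<bar>y\<bar> powr p" .
qed simp

lemma abs_add_powr_le:
  fixes a b p :: real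
  assumes "p \<ge> 1"
  shows "\<bar>a + b\<bar> powr p \<le> 2 powr (p - 1) * (\<bar>a\<bar> powr p + \<bar>b\<bar> powr p)"
proof -
  have "\<bar>a + b\<bar> = 2 * \<bar>(1 - 1/2) *\<^sub>R a + (1/2) *\<^sub>R b\<bar>"
    by (simp flip: abs_mult add_divide_distrib)
  then have "\<bar>a + b\<bar> powr p = 2 powr p * \<bar>(1 - 1/2) *\<^sub>R a + (1/2) *\<^sub>R b\<bar> powr p"
    by (simp add: powr_mult)
  also have "\<dots> \<le> 2 powr p * ((1 - 1/2) * \<bar>a\<bar> powr p + (1/2) * \<bar>b\<bar> powr p)"
    by (intro mult_left_mono convex_onD[OF convex_on_abs_powr[OF assms]]) auto
  also have "\<dots> = 2 powr (p - 1) * (\<bar>a\<bar> powr p + \<bar>b\<bar> powr p)"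
    by (simp add: powr_diff field_simps)
  finally show ?thesis .
qed

lemma integrable_abs_powr_add:
  fixes f g :: "'a \<Rightarrow> real"
  assumes "p \<ge> 1" and [measurable]: "f \<in> borel_measurable M" "g \<in> borel_measurable M"
    and "integrable M (\<lambda>x. \<bar>f x\<bar> powr p)" "integrable M (\<lambda>x. \<bar>g x\<bar> powr p)"
  shows "integrable M (\<lambda>x. \<bar>f x + g x\<bar> powr p)"
proof (rule Bochner_Integration.integrable_bound)
  show "integrable M (\<lambda>x. 2 powr (p - 1) * (\<bar>f x\<bar> powr p + \<bar>g x\<bar> powr p))"
    using assms by auto
  show "AE x in M. norm (\<bar>f x + g x\<bar> powr p) \<le> norm (2 powr (p - 1) * (\<bar>f x\<bar> powr p + \<bar>g x\<bar> powr p))"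
    using abs_add_powr_le[OF assms(1)] by simp
qed measurable

lemma integrable_abs_inner_powr:
  fixes X :: "'a \<Rightarrow> 'd::euclidean_space"
  assumes "p \<ge> 0" and [measurable]: "X \<in> borel_measurable M"
    and "integrable M (\<lambda>x. norm (X x) powr p)"
  shows "integrable M (\<lambda>x. \<bar>u \<bullet> X x\<bar> powr p)"
proof (rule Bochner_Integration.integrable_bound)
  show "integrable M (\<lambda>x. norm u powr p * norm (X x) powr p)"
    using assms by auto
  have "\<bar>u \<bullet> X x\<bar> powr p \<le> norm u powr p * norm (X x) powr p" for x
    using assms(1) by (simp add: Cauchy_Schwarz_ineq2 powr_mono2 flip: powr_mult)
  then show "AE x in M. norm (\<bar>u \<bullet> X x\<bar> powr p) \<le> norm (norm u powr p * norm (X x) powr p)"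
    by simp
qed measurable

lemma (in finite_measure) integrable_of_integrable_norm_powr:
  fixes Y :: "'a \<Rightarrow> 'b::{banach, second_countable_topology}"
  assumes "p \<ge> 1" and "Y \<in> borel_measurable M" and "integrable M (\<lambda>x. norm (Y x) powr p)"
  shows "integrable M Y"
proof (rule Bochner_Integration.integrable_bound)
  show "integrable M (\<lambda>x. 1 + norm (Y x) powr p)"
    using assms by auto
  have "norm (Y x) \<le> 1 + norm (Y x) powr p" for x
  proof (cases "norm (Y x) \<le> 1")
    case False
    then have "norm (Y x) powr 1 \<le> norm (Y x) powr p"
      using assms(1) by (intro powr_mono) auto
    then show ?thesis by simp
  qed (simp add: add_increasing2)
  then show "AE x in M. norm (Y x) \<le> norm (1 + norm (Y x) powr p)"
    by simp
qed fact

lemma Lp_norm_ge_iff: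
  assumes "A > 0" "p > 0"
  shows "A \<le> Lp_norm M f p \<longleftrightarrow> A powr p \<le> (\<integral>x. \<bar>f x\<bar> powr p \<partial>M)"
proof
  have I: "(\<integral>x. \<bar>f x\<bar> powr p \<partial>M) \<ge> 0"
    by (rule integral_nonneg_AE) simp
  assume "A \<le> Lp_norm M f p"
  then have "A powr p \<le> Lp_norm M f p powr p"
    using assms by (intro powr_mono2) auto
  also have "\<dots> = (\<integral>x. \<bar>f x\<bar> powr p \<partial>M)"
    using assms I by (simp add: Lp_norm_def powr_powr)
  finally show "A powr p \<le> (\<integral>x. \<bar>f x\<bar> powr p \<partial>M)" .
next
  assume "A powr p \<le> (\<integral>x. \<bar>f x\<bar> powr p \<partial>M)"
  then have "(A powr p) powr (1/p) \<le> Lp_norm M f p"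
    unfolding Lp_norm_def using assms by (intro powr_mono2) auto
  then show "A \<le> Lp_norm M f p"
    using assms by (simp add: powr_powr)
qed

lemma nn_integral_eq_if_distr_eq:
  assumes [measurable]: "X \<in> measurable M N" "X' \<in> measurable M N" "f \<in> borel_measurable N"
    and "distr M N X' = distr M N X"
  shows "(\<integral>\<^sup>+\<omega>. f (X' \<omega>) \<partial>M) = (\<integral>\<^sup>+\<omega>. f (X \<omega>) \<partial>M)"
  by (metis assms nn_integral_distr measurable_distr_eq1)

lemma integrable_iff_distr_eq:
  fixes f :: "'b \<Rightarrow> 'c::{banach, second_countable_topology}"
  assumes [measurable]: "X \<in> measurable M N" "X' \<in> measurable M N" "f \<in> borel_measurable N"
    and "distr M N X' = distr M N X"
  shows "integrable M (\<lambda>\<omega>. f (X' \<omega>)) \<longleftrightarrow> integrable M (\<lambda>\<omega>. f (X \<omega>))"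
  by (metis assms integrable_distr_eq)

lemma integral_le_if_nn_integral_le:
  fixes f g :: "'a \<Rightarrow> real"
  assumes "integrable M f" "integrable M g" "AE x in M. 0 \<le> f x" "AE x in M. 0 \<le> g x"
    and "(\<integral>\<^sup>+x. ennreal (f x) \<partial>M) \<le> (\<integral>\<^sup>+x. ennreal (g x) \<partial>M)"
  shows "integral\<^sup>L M f \<le> integral\<^sup>L M g"
  using assms by (simp add: nn_integral_eq_integral integral_nonneg_AE)

lemma (in prob_space) central_moment_le_indep_copy:
  fixes Y Y' :: "'a \<Rightarrow> real"
  assumes p: "p \<ge> 1"
    and [measurable]: "Y \<in> borel_measurable M" "Y' \<in> borel_measurable M"
    and intY: "integrable M (\<lambda>\<omega>. \<bar>Y \<omega>\<bar> powr p)"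
    and ind: "indep_var borel Y borel Y'"
    and dist: "distr M borel Y' = distr M borel Y"
  shows "(\<integral>\<omega>. \<bar>Y \<omega> - expectation Y\<bar> powr p \<partial>M) \<le> (\<integral>\<omega>. \<bar>Y \<omega> - Y' \<omega>\<bar> powr p \<partial>M)"
proof -
  define N where "N = distr M borel Y"
  define c where "c = expectation Y"
  interpret N: prob_space N
    unfolding N_def by (rule prob_space_distr) simp
  have [measurable_cong, simp]: "sets N = sets borel" and [simp]: "space N = UNIV"
    by (simp_all add: N_def)
  have intN: "integrable N (\<lambda>y. y)" and EN: "N.expectation (\<lambda>y. y) = c"
    using integrable_of_integrable_norm_powr[OF p _ intY[unfolded real_norm_def[symmetric]]]
    by (simp_all add: N_def c_def integrable_distr_eq integral_distr)
  have intN_powr: "integrable N (\<lambda>y. \<bar>y\<bar> powr p)"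
    using intY by (simp add: N_def integrable_distr_eq)
  have intN_diff: "integrable N (\<lambda>y. \<bar>x - y\<bar> powr p)" for x
    using integrable_abs_powr_add[OF p, of "\<lambda>_. x" N uminus] intN_powr
    by (simp add: measurable_ident_sets)
  have jensen: "\<bar>x - c\<bar> powr p \<le> N.expectation (\<lambda>y. \<bar>x - y\<bar> powr p)" for x
  proof -
    have "\<bar>N.expectation (\<lambda>y. x - y)\<bar> powr p \<le> N.expectation (\<lambda>y. \<bar>x - y\<bar> powr p)"
      using intN intN_diff convex_on_abs_powr[OF p]
      by (intro N.jensens_inequality[where I=UNIV]) auto
    moreover have "N.expectation (\<lambda>y. x - y) = x - c"
      using intN EN N.prob_space by simp
    ultimately show ?thesis by simp
  qed
  have "(\<integral>\<^sup>+\<omega>. \<bar>Y \<omega> - c\<bar> powr p \<partial>M) = (\<integral>\<^sup>+x. \<bar>x - c\<bar> powr p \<partial>N)"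
    by (simp add: N_def nn_integral_distr)
  also have "\<dots> \<le> (\<integral>\<^sup>+x. \<integral>\<^sup>+y. \<bar>x - y\<bar> powr p \<partial>N \<partial>N)"
    using jensen intN_diff by (intro nn_integral_mono) (simp add: nn_integral_eq_integral)
  also have "\<dots> = (\<integral>\<^sup>+z. \<bar>fst z - snd z\<bar> powr p \<partial>(N \<Otimes>\<^sub>M N))"
    by (subst N.nn_integral_fst[symmetric]) simp_all
  also have "N \<Otimes>\<^sub>M N = distr M (borel \<Otimes>\<^sub>M borel) (\<lambda>\<omega>. (Y \<omega>, Y' \<omega>))"
    using ind unfolding indep_var_distribution_eq N_def dist[symmetric] by simp
  also have "(\<integral>\<^sup>+z. \<bar>fst z - snd z\<bar> powr p \<partial>\<dots>) = (\<integral>\<^sup>+\<omega>. \<bar>Y \<omega> - Y' \<omega>\<bar> powr p \<partial>M)"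
    by (simp add: nn_integral_distr)
  finally have "(\<integral>\<^sup>+\<omega>. \<bar>Y \<omega> - c\<bar> powr p \<partial>M) \<le> (\<integral>\<^sup>+\<omega>. \<bar>Y \<omega> - Y' \<omega>\<bar> powr p \<partial>M)" .
  moreover have "integrable M (\<lambda>\<omega>. \<bar>Y \<omega> - c\<bar> powr p)"
    using integrable_abs_powr_add[OF p, of Y M "\<lambda>_. - c"] intY by simp
  moreover have "integrable M (\<lambda>\<omega>. \<bar>Y \<omega> - Y' \<omega>\<bar> powr p)"
  proof -
    have "integrable M (\<lambda>\<omega>. \<bar>Y' \<omega>\<bar> powr p)"
      using intY integrable_iff_distr_eq[OF _ _ _ dist, of "\<lambda>y. \<bar>y\<bar> powr p"] by simp
    then show ?thesis
      using integrable_abs_powr_add[OF p, of Y M "\<lambda>\<omega>. - Y' \<omega>"] intY by simp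
  qed
  ultimately show ?thesis
    unfolding c_def by (intro integral_le_if_nn_integral_le) auto
qed

lemma (in prob_space) Lp_norm_indep_copy_ge:
  fixes Y Y' :: "'a \<Rightarrow> real"
  assumes p: "p \<ge> 1"
    and [measurable]: "Y \<in> borel_measurable M" "Y' \<in> borel_measurable M"
    and intY: "integrable M (\<lambda>\<omega>. \<bar>Y \<omega>\<bar> powr p)"
    and ind: "indep_var borel Y borel Y'"
    and dist: "distr M borel Y' = distr M borel Y"
    and A: "A > 0" "A \<le> Lp_norm M Y p"
    and mean: "\<bar>expectation Y\<bar> \<le> A / 2"
  shows "A / 2 \<le> Lp_norm M (\<lambda>\<omega>. Y \<omega> - Y' \<omega>) p"
proof -
  define c where "c = expectation Y"
  define I where "I = (\<integral>\<omega>. \<bar>Y \<omega> - Y' \<omega>\<bar> powr p \<partial>M)"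
  have int_centered: "integrable M (\<lambda>\<omega>. \<bar>Y \<omega> - c\<bar> powr p)"
    using integrable_abs_powr_add[OF p, of Y M "\<lambda>_. - c"] intY by simp
  have "2 powr (p - 1) * (2 * (A / 2) powr p) = A powr p"
    using A by (simp add: powr_diff powr_divide)
  also have "A powr p \<le> (\<integral>\<omega>. \<bar>Y \<omega>\<bar> powr p \<partial>M)"
    using A p by (simp add: Lp_norm_ge_iff)
  also have "\<dots> \<le> (\<integral>\<omega>. 2 powr (p - 1) * (\<bar>Y \<omega> - c\<bar> powr p + \<bar>c\<bar> powr p) \<partial>M)"
    using intY int_centered abs_add_powr_le[OF p, of "Y _ - c" c]
    by (intro integral_mono) auto
  also have "\<dots> = 2 powr (p - 1) * ((\<integral>\<omega>. \<bar>Y \<omega> - c\<bar> powr p \<partial>M) + \<bar>c\<bar> powr p)"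
    using int_centered by (simp add: prob_space)
  also have "\<dots> \<le> 2 powr (p - 1) * (I + (A / 2) powr p)"
    using central_moment_le_indep_copy[OF p _ _ intY ind dist] mean p
    unfolding c_def I_def by (intro mult_left_mono add_mono powr_mono2) auto
  finally have "(A / 2) powr p \<le> I"
    by simp
  then show ?thesis
    using A p Lp_norm_ge_iff[of "A / 2" p M "\<lambda>\<omega>. Y \<omega> - Y' \<omega>"] unfolding I_def by simp
qed

lemma (in prob_space) Lp_norm_inner_indep_copy_ge:
  fixes X X' :: "'a \<Rightarrow> 'd::euclidean_space"
  assumes p: "p \<ge> 1"
    and [measurable]: "X \<in> borel_measurable M" "X' \<in> borel_measurable M"
    and intX: "integrable M (\<lambda>\<omega>. norm (X \<omega>) powr p)"
    and ind: "indep_var borel X borel X'"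
    and dist: "distr M borel X' = distr M borel X"
    and A: "A > 0" "A \<le> Lp_norm M (\<lambda>\<omega>. u \<bullet> X \<omega>) p"
    and mean: "\<bar>u \<bullet> expectation X\<bar> \<le> A / 2"
  shows "A / 2 \<le> Lp_norm M (\<lambda>\<omega>. u \<bullet> (X \<omega> - X' \<omega>)) p"
proof -
  have "integrable M X"
    using integrable_of_integrable_norm_powr[OF p _ intX] by simp
  then have "expectation (\<lambda>\<omega>. u \<bullet> X \<omega>) = u \<bullet> expectation X"
    by simp
  moreover have "indep_var borel (\<lambda>\<omega>. u \<bullet> X \<omega>) borel (\<lambda>\<omega>. u \<bullet> X' \<omega>)"
    using indep_var_compose[OF ind, of "\<lambda>x. u \<bullet> x" borel "\<lambda>x. u \<bullet> x" borel]
    by (simp add: comp_def)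
  moreover have "distr M borel (\<lambda>\<omega>. u \<bullet> X' \<omega>) = distr M borel (\<lambda>\<omega>. u \<bullet> X \<omega>)"
    using distr_distr[of "\<lambda>x. u \<bullet> x" borel borel X' M] distr_distr[of "\<lambda>x. u \<bullet> x" borel borel X M]
    by (simp add: dist comp_def)
  ultimately show ?thesis
    using Lp_norm_indep_copy_ge[OF p _ _ integrable_abs_inner_powr[OF _ _ intX]] p A mean
    by (simp add: inner_diff_right)
qed

definition width :: "'d::real_inner set \<Rightarrow> 'd \<Rightarrow> ennreal" where
  "width T x = (\<Squnion>t\<in>T. \<Squnion>s\<in>T. ennreal ((t - s) \<bullet> x))"

lemma SMP_p_iff_width:
  "SMP_p M X p \<kappa> \<longleftrightarrow>
     (\<forall>A>0. \<forall>T. (infinite T \<or> exp p \<le> real (card T)) \<longrightarrow>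
        (\<forall>s\<in>T. \<forall>t\<in>T. s \<noteq> t \<longrightarrow> A \<le> Lp_norm M (\<lambda>\<omega>. (t - s) \<bullet> X \<omega>) p) \<longrightarrow>
        ennreal (\<kappa> * A) \<le> (\<integral>\<^sup>+\<omega>. width T (X \<omega>) \<partial>M))"
  by (simp add: SMP_p_def width_def)

lemma width_ge: "s \<in> T \<Longrightarrow> t \<in> T \<Longrightarrow> ennreal ((t - s) \<bullet> x) \<le> width T x"
  unfolding width_def by (intro SUP_upper2[of t] SUP_upper)

lemma width_mono: "S \<subseteq> T \<Longrightarrow> width S x \<le> width T x"
  unfolding width_def by (intro SUP_subset_mono) auto

lemma ennreal_add_le: "ennreal (a + b) \<le> ennreal a + ennreal b"
proof -
  have "ennreal (a + b) \<le> ennreal (max 0 a + max 0 b)"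
    by (intro ennreal_leI) auto
  then show ?thesis
    by (simp add: ennreal_max_0)
qed

lemma width_diff_le: "width T (x - y) \<le> width T x + width T y"
  unfolding width_def[of T "x - y"]
proof (intro SUP_least)
  fix s t assume "t \<in> T" "s \<in> T"
  have "ennreal ((t - s) \<bullet> (x - y)) = ennreal ((t - s) \<bullet> x + (s - t) \<bullet> y)"
    by (simp add: inner_diff_left inner_diff_right algebra_simps)
  also have "\<dots> \<le> ennreal ((t - s) \<bullet> x) + ennreal ((s - t) \<bullet> y)"
    by (rule ennreal_add_le)
  also have "\<dots> \<le> width T x + width T y"
    using \<open>t \<in> T\<close> \<open>s \<in> T\<close> by (intro add_mono width_ge)
  finally show "ennreal ((t - s) \<bullet> (x - y)) \<le> width T x + width T y" .
qed

lemma borel_measurable_width [measurable]: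
  assumes "countable T"
  shows "width T \<in> borel_measurable borel"
  unfolding width_def
  by (intro borel_measurable_SUP assms measurable_compose[OF _ measurable_ennreal] borel_measurable_continuous_onI continuous_intros)

lemma nn_integral_width_diff_le:
  assumes "countable T" and [measurable]: "X \<in> borel_measurable M" "X' \<in> borel_measurable M"
    and "distr M borel X' = distr M borel X"
  shows "(\<integral>\<^sup>+\<omega>. width T (X \<omega> - X' \<omega>) \<partial>M) \<le> 2 * (\<integral>\<^sup>+\<omega>. width T (X \<omega>) \<partial>M)"
proof -
  have "(\<integral>\<^sup>+\<omega>. width T (X \<omega> - X' \<omega>) \<partial>M) \<le> (\<integral>\<^sup>+\<omega>. width T (X \<omega>) + width T (X' \<omega>) \<partial>M)"
    by (intro nn_integral_mono width_diff_le)
  also have "\<dots> = (\<integral>\<^sup>+\<omega>. width T (X \<omega>) \<partial>M) + (\<integral>\<^sup>+\<omega>. width T (X' \<omega>) \<partial>M)"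
    using \<open>countable T\<close> by (intro nn_integral_add) auto
  also have "(\<integral>\<^sup>+\<omega>. width T (X' \<omega>) \<partial>M) = (\<integral>\<^sup>+\<omega>. width T (X \<omega>) \<partial>M)"
    using assms by (intro nn_integral_eq_if_distr_eq) auto
  finally show ?thesis
    by (simp add: mult_2)
qed

lemma (in prob_space) inner_expectation_le_nn_integral_width:
  assumes "integrable M X" "s \<in> T" "t \<in> T"
  shows "ennreal ((t - s) \<bullet> expectation X) \<le> (\<integral>\<^sup>+\<omega>. width T (X \<omega>) \<partial>M)"
proof -
  have "(t - s) \<bullet> expectation X = (\<integral>\<omega>. (t - s) \<bullet> X \<omega> \<partial>M)"
    using assms(1) by simp
  also have "\<dots> \<le> (\<integral>\<omega>. max 0 ((t - s) \<bullet> X \<omega>) \<partial>M)"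
    using assms(1) by (intro integral_mono) auto
  finally have "ennreal ((t - s) \<bullet> expectation X) \<le> ennreal (\<integral>\<omega>. max 0 ((t - s) \<bullet> X \<omega>) \<partial>M)"
    by (rule ennreal_leI)
  also have "\<dots> = (\<integral>\<^sup>+\<omega>. max 0 ((t - s) \<bullet> X \<omega>) \<partial>M)"
    using assms(1) by (intro nn_integral_eq_integral[symmetric]) auto
  also have "\<dots> \<le> (\<integral>\<^sup>+\<omega>. width T (X \<omega>) \<partial>M)"
    using assms(2,3) by (intro nn_integral_mono) (simp add: ennreal_max_0 width_ge)
  finally show ?thesis .
qed

text \<open>The width of an uncountable \<open>T\<close> need not be measurable; countable subsets suffice, as an
  infinite \<open>T\<close> contains a countably infinite one.\<close>

lemma SMP_p_if_countable:
  assumes "\<And>A T. A > 0 \<Longrightarrow> countable T \<Longrightarrow> infinite T \<or> exp p \<le> real (card T) \<Longrightarrow>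
      \<forall>s\<in>T. \<forall>t\<in>T. s \<noteq> t \<longrightarrow> A \<le> Lp_norm M (\<lambda>\<omega>. (t - s) \<bullet> X \<omega>) p \<Longrightarrow>
      ennreal (\<kappa> * A) \<le> (\<integral>\<^sup>+\<omega>. width T (X \<omega>) \<partial>M)"
  shows "SMP_p M X p \<kappa>"
  unfolding SMP_p_iff_width
proof (intro allI impI)
  fix A :: real and T
  assume A: "A > 0" and card: "infinite T \<or> exp p \<le> real (card T)"
    and sep: "\<forall>s\<in>T. \<forall>t\<in>T. s \<noteq> t \<longrightarrow> A \<le> Lp_norm M (\<lambda>\<omega>. (t - s) \<bullet> X \<omega>) p"
  obtain S where S: "S \<subseteq> T" "countable S" "infinite S \<or> exp p \<le> real (card S)"
  proof (cases "finite T")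
    case False
    then obtain f :: "nat \<Rightarrow> _" where "inj f" "range f \<subseteq> T"
      using infinite_countable_subset by blast
    then show ?thesis
      using that[of "range f"] by (auto simp: range_inj_infinite)
  qed (use that card countable_finite in blast)
  have "ennreal (\<kappa> * A) \<le> (\<integral>\<^sup>+\<omega>. width S (X \<omega>) \<partial>M)"
    using S sep by (intro assms A) auto
  also have "\<dots> \<le> (\<integral>\<^sup>+\<omega>. width T (X \<omega>) \<partial>M)"
    using S(1) by (intro nn_integral_mono width_mono)
  finally show "ennreal (\<kappa> * A) \<le> (\<integral>\<^sup>+\<omega>. width T (X \<omega>) \<partial>M)" .
qed

lemma (in prob_space) nn_integral_width_ge_symmetrized:
  fixes X X' :: "'a \<Rightarrow> 'd::euclidean_space"
  assumes p: "p \<ge> 1"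
    and X[measurable]: "X \<in> borel_measurable M" "X' \<in> borel_measurable M"
    and intX: "integrable M (\<lambda>\<omega>. norm (X \<omega>) powr p)"
    and ind: "indep_var borel X borel X'"
    and dist: "distr M borel X' = distr M borel X"
    and \<kappa>: "\<kappa> > 0" and smp: "SMP_p M (\<lambda>\<omega>. X \<omega> - X' \<omega>) p \<kappa>"
    and A: "A > 0" and T: "countable T" "infinite T \<or> exp p \<le> real (card T)"
    and sep: "\<forall>s\<in>T. \<forall>t\<in>T. s \<noteq> t \<longrightarrow> A \<le> Lp_norm M (\<lambda>\<omega>. (t - s) \<bullet> X \<omega>) p"
    and mean: "\<And>s t. s \<in> T \<Longrightarrow> t \<in> T \<Longrightarrow> \<bar>(t - s) \<bullet> expectation X\<bar> \<le> A / 2"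
  shows "ennreal (\<kappa> / 4 * A) \<le> (\<integral>\<^sup>+\<omega>. width T (X \<omega>) \<partial>M)"
proof -
  have sep': "\<forall>s\<in>T. \<forall>t\<in>T. s \<noteq> t \<longrightarrow> A / 2 \<le> Lp_norm M (\<lambda>\<omega>. (t - s) \<bullet> (X \<omega> - X' \<omega>)) p"
    using sep A mean Lp_norm_inner_indep_copy_ge[OF p X intX ind dist] by blast
  have "2 * ennreal (\<kappa> / 4 * A) = ennreal (\<kappa> * (A / 2))"
    using A \<kappa> ennreal_mult[of 2 "\<kappa> / 4 * A"] by (simp add: mult_ac)
  also have "\<dots> \<le> (\<integral>\<^sup>+\<omega>. width T (X \<omega> - X' \<omega>) \<partial>M)"
    using A T(2) sep' by (intro smp[unfolded SMP_p_iff_width, rule_format]) auto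
  also have "\<dots> \<le> 2 * (\<integral>\<^sup>+\<omega>. width T (X \<omega>) \<partial>M)"
    using T(1) dist by (intro nn_integral_width_diff_le) auto
  finally show ?thesis
    by (simp add: ennreal_mult_le_mult_iff)
qed

theorem lemma2p1:
  fixes M :: "'a measure" and X X' :: "'a \<Rightarrow> 'd::euclidean_space"
    and p \<kappa> :: real
  assumes "prob_space M"
    and "p \<ge> 1"
    and "X \<in> borel_measurable M" and "X' \<in> borel_measurable M"
    and "integrable M (\<lambda>\<omega>. norm (X \<omega>) powr p)"
    and "prob_space.indep_var M borel X borel X'"
    and "distr M borel X' = distr M borel X"
    and "\<kappa> > 0"
    and "SMP_p M (\<lambda>\<omega>. X \<omega> - X' \<omega>) p \<kappa>"
  shows "SMP_p M X p (min (1/2) (\<kappa>/4))"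
proof (rule SMP_p_if_countable)
  interpret prob_space M by fact
  fix A :: real and T :: "'d set"
  assume A: "A > 0" and T: "countable T" "infinite T \<or> exp p \<le> real (card T)"
    and sep: "\<forall>s\<in>T. \<forall>t\<in>T. s \<noteq> t \<longrightarrow> A \<le> Lp_norm M (\<lambda>\<omega>. (t - s) \<bullet> X \<omega>) p"
  consider (far) s t where "s \<in> T" "t \<in> T" "A / 2 \<le> (t - s) \<bullet> expectation X"
    | (near) "\<And>s t. s \<in> T \<Longrightarrow> t \<in> T \<Longrightarrow> \<bar>(t - s) \<bullet> expectation X\<bar> \<le> A / 2"
    unfolding abs_le_iff by (metis minus_diff_eq inner_minus_left linorder_not_le less_imp_le neg_le_iff_le)
  then show "ennreal (min (1/2) (\<kappa>/4) * A) \<le> (\<integral>\<^sup>+\<omega>. width T (X \<omega>) \<partial>M)"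
  proof cases
    case far
    have "min (1/2) (\<kappa>/4) * A \<le> 1/2 * A"
      using A by (intro mult_right_mono) auto
    then have "min (1/2) (\<kappa>/4) * A \<le> (t - s) \<bullet> expectation X"
      using far(3) by linarith
    moreover have "ennreal ((t - s) \<bullet> expectation X) \<le> (\<integral>\<^sup>+\<omega>. width T (X \<omega>) \<partial>M)"
      using integrable_of_integrable_norm_powr[OF assms(2,3,5)] far(1,2)
      by (rule inner_expectation_le_nn_integral_width)
    ultimately show ?thesis
      by (meson ennreal_leI order_trans)
  next
    case near
    have "min (1/2) (\<kappa>/4) * A \<le> \<kappa> / 4 * A"
      using A by (intro mult_right_mono) auto
    moreover have "ennreal (\<kappa> / 4 * A) \<le> (\<integral>\<^sup>+\<omega>. width T (X \<omega>) \<partial>M)"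
      using A T sep near by (intro nn_integral_width_ge_symmetrized[OF assms(2-9)])
    ultimately show ?thesis
      by (meson ennreal_leI order_trans)
  qed
qed

end
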